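(* Let $(X,p_X)$ be a non-empty partial metric space. Then there exist a p-Cauchy completion $(\tilde X,j)$ of $X$, a p-Cauchy complete partial metric space $Y$, and an isometric embedding $f\colon X\to Y$ such that there is no isometric embedding $\tilde f\colon\tilde X\to Y$ with $\tilde f\circ j=f$.
   Context: A partial metric on a set $X$ is a function $p_X\colon X\times X\to\mathbb{R}_{\geq0}$ such that for all $x,y,z\in X$: (P1) $p_X(x,x)=p_X(x,y)=p_X(y,y)$ implies $x=y$; (P2) $p_X(x,x)\leq p_X(x,y)$; (P3) $p_X(x,y)=p_X(y,x)$; (P4) $p_X(x,z)+p_X(y,y)\leq p_X(x,y)+p_X(y,z)$. For $x\in X$ and $\varepsilon>0$, $B_\varepsilon(x)=\{y\in X: p_X(x,y)<p_X(x,x)+\varepsilon\}$. A subset $A\subseteq X$ is dense in $X$ if for every $x\in X$ and $\varepsilon>0$ there is $y\in A$ with $y\in B_\varepsilon(x)$. A sequence $(x_n)$ in $X$ p-converges to $x\in X$ if $p_X(x,x)=\lim_{n}p_X(x,x_n)=\lim_{n}p_X(x_n,x_n)$; it is p-Cauchy if $\lim_{n,m\to\infty}p_X(x_n,x_m)$ exists and is finite. $X$ is p-Cauchy complete if every p-Cauchy sequence p-converges. An isometric embedding $i\colon X\to Y$ is a map with $p_Y(i(x),i(y))=p_X(x,y)$ for all $x,y$. A p-Cauchy completion of $X$ is a pair $(\bar X,i)$ where $\bar X$ is a p-Cauchy complete partial metric space and $i\colon X\to\bar X$ is an isometric embedding with $i(X)$ dense in $\bar X$. *)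

theory Defs
  imports Complex_Main
begin

definition partial_metric :: "'a set \<Rightarrow> ('a \<Rightarrow> 'a \<Rightarrow> real) \<Rightarrow> bool" where
  "partial_metric X p \<longleftrightarrow>
     (\<forall>x\<in>X. \<forall>y\<in>X. p x y \<ge> 0) \<and>
     (\<forall>x\<in>X. \<forall>y\<in>X. p x x = p x y \<and> p x y = p y y \<longrightarrow> x = y) \<and>
     (\<forall>x\<in>X. \<forall>y\<in>X. p x x \<le> p x y) \<and>
     (\<forall>x\<in>X. \<forall>y\<in>X. p x y = p y x) \<and>
     (\<forall>x\<in>X. \<forall>y\<in>X. \<forall>z\<in>X. p x z + p y y \<le> p x y + p y z)"

definition pball :: "'a set \<Rightarrow> ('a \<Rightarrow> 'a \<Rightarrow> real) \<Rightarrow> 'a \<Rightarrow> real \<Rightarrow> 'a set" where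
  "pball X p x e = {y \<in> X. p x y < p x x + e}"

definition p_dense :: "'a set \<Rightarrow> ('a \<Rightarrow> 'a \<Rightarrow> real) \<Rightarrow> 'a set \<Rightarrow> bool" where
  "p_dense X p A \<longleftrightarrow> A \<subseteq> X \<and> (\<forall>x\<in>X. \<forall>e>0. \<exists>y\<in>A. y \<in> pball X p x e)"

definition p_converges :: "('a \<Rightarrow> 'a \<Rightarrow> real) \<Rightarrow> (nat \<Rightarrow> 'a) \<Rightarrow> 'a \<Rightarrow> bool" where
  "p_converges p s x \<longleftrightarrow>
     (\<lambda>n. p x (s n)) \<longlonglongrightarrow> p x x \<and> (\<lambda>n. p (s n) (s n)) \<longlonglongrightarrow> p x x"

definition p_cauchy :: "('a \<Rightarrow> 'a \<Rightarrow> real) \<Rightarrow> (nat \<Rightarrow> 'a) \<Rightarrow> bool" where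
  "p_cauchy p s \<longleftrightarrow>
     (\<exists>L::real. \<forall>e>0. \<exists>N. \<forall>n\<ge>N. \<forall>m\<ge>N. \<bar>p (s n) (s m) - L\<bar> < e)"

definition p_complete :: "'a set \<Rightarrow> ('a \<Rightarrow> 'a \<Rightarrow> real) \<Rightarrow> bool" where
  "p_complete X p \<longleftrightarrow>
     (\<forall>s. range s \<subseteq> X \<and> p_cauchy p s \<longrightarrow> (\<exists>x\<in>X. p_converges p s x))"

definition isometric_embedding ::
  "'a set \<Rightarrow> ('a \<Rightarrow> 'a \<Rightarrow> real) \<Rightarrow> 'b set \<Rightarrow> ('b \<Rightarrow> 'b \<Rightarrow> real) \<Rightarrow> ('a \<Rightarrow> 'b) \<Rightarrow> bool" where
  "isometric_embedding X p Y q f \<longleftrightarrow>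
     f ` X \<subseteq> Y \<and> (\<forall>x\<in>X. \<forall>y\<in>X. q (f x) (f y) = p x y)"

definition p_cauchy_completion ::
  "'a set \<Rightarrow> ('a \<Rightarrow> 'a \<Rightarrow> real) \<Rightarrow> 'b set \<Rightarrow> ('b \<Rightarrow> 'b \<Rightarrow> real) \<Rightarrow> ('a \<Rightarrow> 'b) \<Rightarrow> bool" where
  "p_cauchy_completion X p Xt pt j \<longleftrightarrow>
     partial_metric Xt pt \<and> p_complete Xt pt \<and>
     isometric_embedding X p Xt pt j \<and> p_dense Xt pt (j ` X)"

end

theory Submission
  imports Defs "HOL-Analysis.Analysis"
begin

(* Embed X into the bounded real functions on {None} \<union> Some ` X with the sup metric d: the
   Some coordinates carry a Kuratowski embedding of the metric 2 p x y - p x x - p y y, and the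
   None coordinate carries the self-distance p x x as a 1-Lipschitz weight w, so that p is
   recovered as (d a b + w a + w b) / 2 on the closure Xhat of the image.  Adjoin a ghost point
   at sup-distance exactly 1 from the image of a base point x0 and with weight exactly 1 more.
   Then p(ghost, x0) = p(ghost, ghost), so x0 lies in every ball around the ghost and
   Xhat \<union> {ghost} is still a p-Cauchy completion, although the ghost has d-distance at least 1
   from all of X.  Isometries of partial metrics preserve d, so an isometric embedding of
   Xhat \<union> {ghost} into Xhat fixing X would map the ghost to a point of Xhat at d-distance at
   least 1 from X, which is impossible since X is d-dense in Xhat. *)

lemma partial_metric_nonneg: "partial_metric X p \<Longrightarrow> x \<in> X \<Longrightarrow> y \<in> X \<Longrightarrow> 0 \<le> p x y"
  unfolding partial_metric_def by blast

lemma partial_metric_eqI: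
  "partial_metric X p \<Longrightarrow> x \<in> X \<Longrightarrow> y \<in> X \<Longrightarrow> p x x = p x y \<Longrightarrow> p x y = p y y \<Longrightarrow> x = y"
  unfolding partial_metric_def by blast

lemma partial_metric_self_le: "partial_metric X p \<Longrightarrow> x \<in> X \<Longrightarrow> y \<in> X \<Longrightarrow> p x x \<le> p x y"
  unfolding partial_metric_def by blast

lemma partial_metric_sym: "partial_metric X p \<Longrightarrow> x \<in> X \<Longrightarrow> y \<in> X \<Longrightarrow> p x y = p y x"
  unfolding partial_metric_def by blast

lemma partial_metric_triangle:
  "partial_metric X p \<Longrightarrow> x \<in> X \<Longrightarrow> y \<in> X \<Longrightarrow> z \<in> X \<Longrightarrow> p x z + p y y \<le> p x y + p y z"
  unfolding partial_metric_def by blast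

lemma partial_metric_subset: "partial_metric X p \<Longrightarrow> A \<subseteq> X \<Longrightarrow> partial_metric A p"
  unfolding partial_metric_def by (meson subsetD)

definition pmetric_dist :: "('a \<Rightarrow> 'a \<Rightarrow> real) \<Rightarrow> 'a \<Rightarrow> 'a \<Rightarrow> real" where
  "pmetric_dist p x y = 2 * p x y - p x x - p y y"

lemma pmetric_dist_self [simp]: "pmetric_dist p x x = 0"
  by (simp add: pmetric_dist_def)

context
  fixes X :: "'a set" and p :: "'a \<Rightarrow> 'a \<Rightarrow> real"
  assumes pm: "partial_metric X p"
begin

lemma pmetric_dist_nonneg: "x \<in> X \<Longrightarrow> y \<in> X \<Longrightarrow> 0 \<le> pmetric_dist p x y"
  using partial_metric_self_le[OF pm, of x y] partial_metric_self_le[OF pm, of y x]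
    partial_metric_sym[OF pm, of x y]
  by (simp add: pmetric_dist_def)

lemma pmetric_dist_sym: "x \<in> X \<Longrightarrow> y \<in> X \<Longrightarrow> pmetric_dist p x y = pmetric_dist p y x"
  using partial_metric_sym[OF pm, of x y] by (simp add: pmetric_dist_def)

lemma pmetric_dist_triangle:
  "x \<in> X \<Longrightarrow> y \<in> X \<Longrightarrow> z \<in> X \<Longrightarrow> pmetric_dist p x z \<le> pmetric_dist p x y + pmetric_dist p y z"
  using partial_metric_triangle[OF pm, of x y z] by (simp add: pmetric_dist_def)

lemma abs_self_diff_le_pmetric_dist: "x \<in> X \<Longrightarrow> y \<in> X \<Longrightarrow> \<bar>p x x - p y y\<bar> \<le> pmetric_dist p x y"
  using partial_metric_self_le[OF pm, of x y] partial_metric_self_le[OF pm, of y x]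
    partial_metric_sym[OF pm, of x y]
  by (simp add: pmetric_dist_def abs_le_iff)

lemma abs_pmetric_dist_diff_le:
  "x \<in> X \<Longrightarrow> y \<in> X \<Longrightarrow> z \<in> X \<Longrightarrow> \<bar>pmetric_dist p x z - pmetric_dist p y z\<bar> \<le> pmetric_dist p x y"
  using pmetric_dist_triangle[of x y z] pmetric_dist_triangle[of y x z] pmetric_dist_sym[of x y]
  by (simp add: abs_le_iff)

lemma pmetric_dist_tendsto_0_imp_p_converges:
  assumes "l \<in> X" "range s \<subseteq> X" and lim: "(\<lambda>n. pmetric_dist p (s n) l) \<longlonglongrightarrow> 0"
  shows "p_converges p s l"
proof -
  have sX: "s n \<in> X" for n
    using assms(2) by auto
  have "\<bar>p l (s n) - p l l\<bar> \<le> pmetric_dist p (s n) l" for n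
    using partial_metric_self_le[OF pm \<open>l \<in> X\<close> sX] partial_metric_self_le[OF pm sX \<open>l \<in> X\<close>]
      partial_metric_sym[OF pm \<open>l \<in> X\<close> sX]
    by (simp add: pmetric_dist_def abs_le_iff)
  moreover have "\<bar>p (s n) (s n) - p l l\<bar> \<le> pmetric_dist p (s n) l" for n
    using abs_self_diff_le_pmetric_dist[OF sX \<open>l \<in> X\<close>] .
  ultimately have "(\<lambda>n. p l (s n) - p l l) \<longlonglongrightarrow> 0" "(\<lambda>n. p (s n) (s n) - p l l) \<longlonglongrightarrow> 0"
    by (auto intro!: Lim_null_comparison[OF _ lim] always_eventually)
  then show ?thesis
    unfolding p_converges_def by (auto intro: LIM_zero_cancel)
qed

end

lemma p_cauchy_pmetric_dist:
  assumes "p_cauchy p s" "e > 0"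
  shows "\<exists>N. \<forall>n\<ge>N. \<forall>m\<ge>N. pmetric_dist p (s n) (s m) < e"
proof -
  obtain L where L: "\<forall>e>0. \<exists>N. \<forall>n\<ge>N. \<forall>m\<ge>N. \<bar>p (s n) (s m) - L\<bar> < e"
    using assms(1) unfolding p_cauchy_def by blast
  have "e / 4 > 0"
    using assms(2) by simp
  then obtain N where N: "\<forall>n\<ge>N. \<forall>m\<ge>N. \<bar>p (s n) (s m) - L\<bar> < e / 4"
    using L by blast
  have "pmetric_dist p (s n) (s m) < e" if "n \<ge> N" "m \<ge> N" for n m
  proof -
    have "\<bar>p (s n) (s m) - L\<bar> < e / 4" "\<bar>p (s n) (s n) - L\<bar> < e / 4" "\<bar>p (s m) (s m) - L\<bar> < e / 4"
      using N that by auto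
    then show ?thesis
      unfolding pmetric_dist_def abs_less_iff by linarith
  qed
  then show ?thesis
    by blast
qed

lemma isometric_embeddingD:
  "isometric_embedding X p Y q f \<Longrightarrow> x \<in> X \<Longrightarrow> y \<in> X \<Longrightarrow> q (f x) (f y) = p x y"
  unfolding isometric_embedding_def by blast

lemma isometric_embedding_comp:
  "isometric_embedding X p Y q f \<Longrightarrow> isometric_embedding Y q Z r g \<Longrightarrow> isometric_embedding X p Z r (g \<circ> f)"
  unfolding isometric_embedding_def by (auto simp: image_subset_iff)

lemma isometric_embedding_pmetric_dist:
  "isometric_embedding X p Y q f \<Longrightarrow> x \<in> X \<Longrightarrow> y \<in> X \<Longrightarrow> pmetric_dist q (f x) (f y) = pmetric_dist p x y"
  unfolding isometric_embedding_def pmetric_dist_def by simp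

context
  fixes A :: "'a set" and p :: "'a \<Rightarrow> 'a \<Rightarrow> real"
    and A' :: "'b set" and q :: "'b \<Rightarrow> 'b \<Rightarrow> real" and f :: "'a \<Rightarrow> 'b"
  assumes iso: "isometric_embedding A p A' q f" and onto: "f ` A = A'"
begin

lemma partial_metric_isometric_image:
  assumes "partial_metric A p" shows "partial_metric A' q"
  unfolding partial_metric_def
proof (intro conjI ballI impI)
  fix a b c assume "a \<in> A'" "b \<in> A'" "c \<in> A'"
  then obtain x y z where xyz: "x \<in> A" "y \<in> A" "z \<in> A" and "a = f x" "b = f y" "c = f z"
    using onto by blast
  then have eq: "q a b = p x y" "q a a = p x x" "q b b = p y y" "q b a = p y x"
      "q a c = p x z" "q b c = p y z"
    by (simp_all add: isometric_embeddingD[OF iso])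
  show "0 \<le> q a b" "q a a \<le> q a b" "q a b = q b a" "q a c + q b b \<le> q a b + q b c"
    using eq xyz partial_metric_nonneg[OF assms] partial_metric_self_le[OF assms]
      partial_metric_sym[OF assms] partial_metric_triangle[OF assms]
    by simp_all
  assume "q a a = q a b \<and> q a b = q b b"
  then have "x = y"
    using eq by (intro partial_metric_eqI[OF assms xyz(1,2)]) simp_all
  then show "a = b"
    using \<open>a = f x\<close> \<open>b = f y\<close> by simp
qed

lemma p_complete_isometric_image:
  assumes "p_complete A p" shows "p_complete A' q"
  unfolding p_complete_def
proof (intro allI impI)
  fix s assume s: "range s \<subseteq> A' \<and> p_cauchy q s"
  have "\<forall>n. \<exists>x. x \<in> A \<and> s n = f x"
    using s onto by blast
  then obtain t where t: "\<And>n. t n \<in> A \<and> s n = f (t n)"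
    by metis
  then have "p_cauchy p t"
    using s by (simp add: p_cauchy_def isometric_embeddingD[OF iso])
  then obtain x where "x \<in> A" "p_converges p t x"
    using assms t unfolding p_complete_def by blast
  then have "p_converges q s (f x)"
    using t by (simp add: p_converges_def isometric_embeddingD[OF iso])
  then show "\<exists>y\<in>A'. p_converges q s y"
    using \<open>x \<in> A\<close> onto by blast
qed

lemma p_dense_isometric_image:
  assumes "p_dense A p D" shows "p_dense A' q (f ` D)"
  unfolding p_dense_def
proof (intro conjI ballI allI impI)
  show "f ` D \<subseteq> A'"
    using assms onto unfolding p_dense_def by blast
  fix a and e :: real assume "a \<in> A'" "e > 0"
  then obtain x where "x \<in> A" "a = f x"
    using onto by blast
  then obtain y where "y \<in> D" "y \<in> pball A p x e"
    using assms \<open>e > 0\<close> unfolding p_dense_def by blast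
  then have "f y \<in> pball A' q a e"
    using \<open>x \<in> A\<close> \<open>a = f x\<close> onto by (auto simp: pball_def isometric_embeddingD[OF iso])
  then show "\<exists>b\<in>f ` D. b \<in> pball A' q a e"
    using \<open>y \<in> D\<close> by blast
qed

lemma p_cauchy_completion_isometric_image:
  "p_cauchy_completion X p0 A p j \<Longrightarrow> p_cauchy_completion X p0 A' q (f \<circ> j)"
  unfolding p_cauchy_completion_def
  using partial_metric_isometric_image p_complete_isometric_image
    p_dense_isometric_image[of "j ` X"] isometric_embedding_comp[OF _ iso]
  by (auto simp: image_comp)

end

definition image_pmetric :: "'a set \<Rightarrow> ('a \<Rightarrow> 'b) \<Rightarrow> ('a \<Rightarrow> 'a \<Rightarrow> real) \<Rightarrow> 'b \<Rightarrow> 'b \<Rightarrow> real" where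
  "image_pmetric B g p a b = p (inv_into B g a) (inv_into B g b)"

lemma isometric_embedding_image_pmetric:
  "inj_on g B \<Longrightarrow> A \<subseteq> B \<Longrightarrow> isometric_embedding A p (g ` A) (image_pmetric B g p) g"
  unfolding isometric_embedding_def image_pmetric_def by (auto simp: subset_iff)

lemma isometric_embedding_inv_into_image_pmetric:
  "inj_on g B \<Longrightarrow> A \<subseteq> B \<Longrightarrow> isometric_embedding (g ` A) (image_pmetric B g p) A p (inv_into B g)"
  unfolding isometric_embedding_def image_pmetric_def by (auto simp: subset_iff)

definition nonextendable_completion ::
  "'a set \<Rightarrow> ('a \<Rightarrow> 'a \<Rightarrow> real) \<Rightarrow> 'b set \<Rightarrow> ('b \<Rightarrow> 'b \<Rightarrow> real) \<Rightarrow> ('a \<Rightarrow> 'b)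
    \<Rightarrow> 'c set \<Rightarrow> ('c \<Rightarrow> 'c \<Rightarrow> real) \<Rightarrow> ('a \<Rightarrow> 'c) \<Rightarrow> bool" where
  "nonextendable_completion X p Xt pt j Y q f \<longleftrightarrow>
     p_cauchy_completion X p Xt pt j \<and> partial_metric Y q \<and> p_complete Y q \<and>
     isometric_embedding X p Y q f \<and>
     \<not> (\<exists>ft. isometric_embedding Xt pt Y q ft \<and> (\<forall>x\<in>X. ft (j x) = f x))"

lemma nonextendable_completion_image:
  assumes g: "inj_on g Xt" and "Y \<subseteq> Xt"
    and nonext: "nonextendable_completion X p Xt pt j Y pt f"
  defines "q \<equiv> image_pmetric Xt g pt"
  shows "nonextendable_completion X p (g ` Xt) q (g \<circ> j) (g ` Y) q (g \<circ> f)"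
proof -
  have iso_Xt: "isometric_embedding Xt pt (g ` Xt) q g"
    unfolding q_def using g by (rule isometric_embedding_image_pmetric) simp
  have iso_Y: "isometric_embedding Y pt (g ` Y) q g"
    unfolding q_def using g \<open>Y \<subseteq> Xt\<close> by (rule isometric_embedding_image_pmetric)
  have inv_Y: "isometric_embedding (g ` Y) q Y pt (inv_into Xt g)"
    unfolding q_def using g \<open>Y \<subseteq> Xt\<close> by (rule isometric_embedding_inv_into_image_pmetric)
  have extension_pullback: "\<exists>ft. isometric_embedding Xt pt Y pt ft \<and> (\<forall>x\<in>X. ft (j x) = f x)"
    if "isometric_embedding (g ` Xt) q (g ` Y) q ft" "\<forall>x\<in>X. ft ((g \<circ> j) x) = (g \<circ> f) x" for ft
  proof (intro exI conjI ballI)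
    show "isometric_embedding Xt pt Y pt (inv_into Xt g \<circ> (ft \<circ> g))"
      by (rule isometric_embedding_comp[OF isometric_embedding_comp[OF iso_Xt that(1)] inv_Y])
    fix x assume "x \<in> X"
    then have "f x \<in> Xt"
      using nonext \<open>Y \<subseteq> Xt\<close> unfolding nonextendable_completion_def isometric_embedding_def by blast
    then show "(inv_into Xt g \<circ> (ft \<circ> g)) (j x) = f x"
      using that(2) \<open>x \<in> X\<close> g by simp
  qed
  have "p_cauchy_completion X p Xt pt j" "partial_metric Y pt" "p_complete Y pt"
    "isometric_embedding X p Y pt f" and no_ext_Xt: "\<not> (\<exists>ft. isometric_embedding Xt pt Y pt ft \<and> (\<forall>x\<in>X. ft (j x) = f x))"
    using nonext unfolding nonextendable_completion_def by auto
  then show ?thesis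
    unfolding nonextendable_completion_def
  proof (intro conjI)
    show "\<not> (\<exists>ft. isometric_embedding (g ` Xt) q (g ` Y) q ft \<and> (\<forall>x\<in>X. ft ((g \<circ> j) x) = (g \<circ> f) x))"
      using extension_pullback no_ext_Xt by blast
  qed (auto intro: isometric_embedding_comp[OF _ iso_Y] p_cauchy_completion_isometric_image[OF iso_Xt]
      partial_metric_isometric_image[OF iso_Y] p_complete_isometric_image[OF iso_Y])
qed

definition weighted_pmetric :: "('a \<Rightarrow> 'a \<Rightarrow> real) \<Rightarrow> ('a \<Rightarrow> real) \<Rightarrow> 'a \<Rightarrow> 'a \<Rightarrow> real" where
  "weighted_pmetric d w x y = (d x y + w x + w y) / 2"

locale weighted_metric = Metric_space M d for M :: "'a set" and d +
  fixes w :: "'a \<Rightarrow> real"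
  assumes weight_nonneg: "x \<in> M \<Longrightarrow> 0 \<le> w x"
    and weight_lipschitz: "x \<in> M \<Longrightarrow> y \<in> M \<Longrightarrow> \<bar>w x - w y\<bar> \<le> d x y"
begin

lemma pmetric_dist_weighted_pmetric: "x \<in> M \<Longrightarrow> y \<in> M \<Longrightarrow> pmetric_dist (weighted_pmetric d w) x y = d x y"
  by (simp add: pmetric_dist_def weighted_pmetric_def field_simps)

lemma weighted_pmetric_le: "x \<in> M \<Longrightarrow> y \<in> M \<Longrightarrow> weighted_pmetric d w x y \<le> weighted_pmetric d w x x + d x y"
  using weight_lipschitz[of x y] commute[of x y] by (simp add: weighted_pmetric_def abs_le_iff)

lemma partial_metric_weighted_pmetric: "partial_metric M (weighted_pmetric d w)"
  unfolding partial_metric_def weighted_pmetric_def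
proof (intro conjI ballI impI)
  fix x y z assume xyz: "x \<in> M" "y \<in> M" "z \<in> M"
  show "0 \<le> (d x y + w x + w y) / 2"
    using xyz weight_nonneg[of x] weight_nonneg[of y] nonneg[of x y] by simp
  show "(d x x + w x + w x) / 2 \<le> (d x y + w x + w y) / 2"
    using xyz weight_lipschitz[of x y] by (simp add: abs_le_iff)
  show "(d x y + w x + w y) / 2 = (d y x + w y + w x) / 2"
    using commute[of x y] by simp
  show "(d x z + w x + w z) / 2 + (d y y + w y + w y) / 2 \<le> (d x y + w x + w y) / 2 + (d y z + w y + w z) / 2"
    using xyz triangle[of x y z] by (simp add: field_simps)
  assume "(d x x + w x + w x) / 2 = (d x y + w x + w y) / 2 \<and> (d x y + w x + w y) / 2 = (d y y + w y + w y) / 2"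
  then have "d x y = 0"
    using xyz by (simp del: zero)
  then show "x = y"
    using xyz by simp
qed

lemma p_complete_weighted_pmetric:
  assumes "mcomplete" and closed: "closedin mtopology A"
  shows "p_complete A (weighted_pmetric d w)"
  unfolding p_complete_def
proof (intro allI impI)
  fix s assume "range s \<subseteq> A \<and> p_cauchy (weighted_pmetric d w) s"
  then have sA: "range s \<subseteq> A" and cauchy: "p_cauchy (weighted_pmetric d w) s"
    by blast+
  have AM: "A \<subseteq> M"
    using closedin_subset[OF closed] by simp
  then have sM: "s n \<in> M" for n
    using sA by blast
  have "MCauchy s"
    unfolding MCauchy_def
  proof (intro conjI allI impI)
    fix e :: real assume "e > 0"
    then obtain N where N: "\<forall>n\<ge>N. \<forall>m\<ge>N. pmetric_dist (weighted_pmetric d w) (s n) (s m) < e"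
      using cauchy p_cauchy_pmetric_dist by blast
    show "\<exists>N. \<forall>n m. N \<le> n \<longrightarrow> N \<le> m \<longrightarrow> d (s n) (s m) < e"
      using N pmetric_dist_weighted_pmetric[OF sM sM] by metis
  qed (use sM in blast)
  then obtain l where l: "limitin mtopology s l sequentially"
    using \<open>mcomplete\<close> unfolding mcomplete_def by blast
  have "l \<in> A"
    by (rule limitin_closedin[OF l closed]) (use sA in \<open>auto intro: always_eventually\<close>)
  have "(\<lambda>n. d (s n) l) \<longlonglongrightarrow> 0"
    using l unfolding limitin_metric_dist_null by blast
  moreover have "pmetric_dist (weighted_pmetric d w) (s n) l = d (s n) l" for n
    using sM \<open>l \<in> A\<close> AM by (simp add: pmetric_dist_weighted_pmetric subsetD)
  ultimately have "p_converges (weighted_pmetric d w) s l"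
    using \<open>l \<in> A\<close> AM sA
    by (intro pmetric_dist_tendsto_0_imp_p_converges[OF partial_metric_weighted_pmetric]) auto
  then show "\<exists>x\<in>A. p_converges (weighted_pmetric d w) s x"
    using \<open>l \<in> A\<close> by blast
qed

end

lemma restrict_in_fspace:
  fixes f :: "'b \<Rightarrow> real"
  assumes "\<And>u. u \<in> S \<Longrightarrow> \<bar>f u\<bar> \<le> C"
  shows "restrict f S \<in> Met_TC.fspace S"
  unfolding Met_TC.fspace_def using assms by (auto simp: bounded_iff)

lemma fdist_le_iff:
  fixes f g :: "'b \<Rightarrow> real"
  assumes "f \<in> Met_TC.fspace S" "g \<in> Met_TC.fspace S" "S \<noteq> {}"
  shows "Met_TC.fdist S f g \<le> c \<longleftrightarrow> (\<forall>u\<in>S. \<bar>f u - g u\<bar> \<le> c)"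
  using Met_TC.funspace_mdist_le[OF assms] by (simp add: dist_real_def)

lemma abs_diff_le_fdist:
  fixes f g :: "'b \<Rightarrow> real"
  assumes "f \<in> Met_TC.fspace S" "g \<in> Met_TC.fspace S" "u \<in> S"
  shows "\<bar>f u - g u\<bar> \<le> Met_TC.fdist S f g"
  using fdist_le_iff[OF assms(1,2)] assms(3) by blast

lemma mcomplete_fspace: "Metric_space.mcomplete (Met_TC.fspace S :: ('b \<Rightarrow> real) set) (Met_TC.fdist S)"
  using Met_TC.mcomplete_funspace[of S] complete_UNIV by (simp add: mcomplete_of_def)

locale pointed_partial_metric =
  fixes X :: "'a set" and p :: "'a \<Rightarrow> 'a \<Rightarrow> real" and x0 :: 'a
  assumes partial_metric: "partial_metric X p" and base_in: "x0 \<in> X"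
begin

definition coords :: "'a option set" where
  "coords = insert None (Some ` X)"

lemma None_in_coords [simp]: "None \<in> coords"
  and Some_in_coords [simp]: "Some y \<in> coords \<longleftrightarrow> y \<in> X"
  and coords_nonempty [simp]: "coords \<noteq> {}"
  by (auto simp: coords_def)

abbreviation "FS \<equiv> Met_TC.fspace coords"
abbreviation "FD \<equiv> Met_TC.fdist coords"
abbreviation "pF \<equiv> weighted_pmetric FD (\<lambda>a. \<bar>a None\<bar>)"

sublocale F: weighted_metric FS FD "\<lambda>a. \<bar>a None\<bar>"
proof (intro weighted_metric.intro weighted_metric_axioms.intro Met_TC.Metric_space_funspace)
  fix a b :: "'a option \<Rightarrow> real" assume "a \<in> FS" "b \<in> FS"
  then show "\<bar>\<bar>a None\<bar> - \<bar>b None\<bar>\<bar> \<le> FD a b"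
    using abs_diff_le_fdist[of a coords b None] by (simp add: abs_le_iff) linarith
qed simp

(* Subtracting the distances from x0 keeps the Some coordinates bounded. *)
definition kuratowski :: "'a \<Rightarrow> 'a option \<Rightarrow> real" where
  "kuratowski x = restrict (\<lambda>u. case u of
      None \<Rightarrow> p x x
    | Some y \<Rightarrow> pmetric_dist p x y - pmetric_dist p x0 y) coords"

definition ghost :: "'a option \<Rightarrow> real" where
  "ghost = restrict (\<lambda>u. case u of None \<Rightarrow> p x0 x0 + 1 | Some _ \<Rightarrow> 1) coords"

lemma kuratowski_None [simp]: "kuratowski x None = p x x"
  and kuratowski_Some [simp]: "y \<in> X \<Longrightarrow> kuratowski x (Some y) = pmetric_dist p x y - pmetric_dist p x0 y"
  and ghost_None [simp]: "ghost None = p x0 x0 + 1"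
  and ghost_Some [simp]: "y \<in> X \<Longrightarrow> ghost (Some y) = 1"
  by (simp_all add: kuratowski_def ghost_def)

lemma kuratowski_in_fspace: assumes "x \<in> X" shows "kuratowski x \<in> FS"
  unfolding kuratowski_def
proof (rule restrict_in_fspace)
  fix u assume "u \<in> coords"
  then consider "u = None" | y where "u = Some y" "y \<in> X"
    by (cases u) auto
  then show "\<bar>case u of None \<Rightarrow> p x x | Some y \<Rightarrow> pmetric_dist p x y - pmetric_dist p x0 y\<bar>
      \<le> p x x + pmetric_dist p x x0"
  proof cases
    case 1
    then show ?thesis
      using partial_metric_nonneg[OF partial_metric assms assms]
        pmetric_dist_nonneg[OF partial_metric assms base_in] by simp
  next
    case 2
    then show ?thesis
      using partial_metric_nonneg[OF partial_metric assms assms]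
        abs_pmetric_dist_diff_le[OF partial_metric assms base_in 2(2)] by simp
  qed
qed

lemma ghost_in_fspace: "ghost \<in> FS"
  unfolding ghost_def
  by (rule restrict_in_fspace[where C = "\<bar>p x0 x0\<bar> + 1"]) (auto split: option.split)

lemma fdist_kuratowski:
  assumes "x \<in> X" "y \<in> X"
  shows "FD (kuratowski x) (kuratowski y) = pmetric_dist p x y"
proof (rule antisym)
  have "\<bar>kuratowski x u - kuratowski y u\<bar> \<le> pmetric_dist p x y" if u: "u \<in> coords" for u
  proof -
    consider "u = None" | z where "u = Some z" "z \<in> X"
      using u by (cases u) auto
    then show ?thesis
    proof cases
      case 1
      then show ?thesis
        using abs_self_diff_le_pmetric_dist[OF partial_metric assms] by simp
    next
      case 2
      then show ?thesis
        using abs_pmetric_dist_diff_le[OF partial_metric assms 2(2)] by simp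
    qed
  qed
  then show "FD (kuratowski x) (kuratowski y) \<le> pmetric_dist p x y"
    using fdist_le_iff[OF kuratowski_in_fspace[OF assms(1)] kuratowski_in_fspace[OF assms(2)]] by simp
  show "pmetric_dist p x y \<le> FD (kuratowski x) (kuratowski y)"
    using abs_diff_le_fdist[OF kuratowski_in_fspace[OF assms(1)] kuratowski_in_fspace[OF assms(2)],
        of "Some y"] assms pmetric_dist_nonneg[OF partial_metric assms]
    by simp
qed

lemma isometric_embedding_kuratowski: "isometric_embedding X p FS pF kuratowski"
  unfolding isometric_embedding_def
proof (intro conjI ballI)
  show "kuratowski ` X \<subseteq> FS"
    using kuratowski_in_fspace by blast
  fix x y assume "x \<in> X" "y \<in> X"
  then show "pF (kuratowski x) (kuratowski y) = p x y"
    using partial_metric_nonneg[OF partial_metric] fdist_kuratowski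
    by (simp add: weighted_pmetric_def pmetric_dist_def)
qed

lemma one_le_fdist_ghost: assumes "x \<in> X" shows "1 \<le> FD ghost (kuratowski x)"
  using abs_diff_le_fdist[OF ghost_in_fspace kuratowski_in_fspace[OF assms], of "Some x"]
    assms pmetric_dist_nonneg[OF partial_metric base_in assms]
  by simp

lemma fdist_ghost_base: "FD ghost (kuratowski x0) = 1"
proof (rule antisym)
  show "FD ghost (kuratowski x0) \<le> 1"
    using base_in by (subst fdist_le_iff[OF ghost_in_fspace kuratowski_in_fspace])
      (auto simp: coords_def)
qed (rule one_le_fdist_ghost[OF base_in])

lemma pF_ghost_base: "pF ghost (kuratowski x0) = pF ghost ghost"
  using fdist_ghost_base partial_metric_nonneg[OF partial_metric base_in base_in] ghost_in_fspace
  by (simp add: weighted_pmetric_def)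

definition Xhat :: "('a option \<Rightarrow> real) set" where
  "Xhat = F.mtopology closure_of (kuratowski ` X)"

lemma kuratowski_in_Xhat: "x \<in> X \<Longrightarrow> kuratowski x \<in> Xhat"
proof -
  have "kuratowski ` X \<subseteq> FS"
    using kuratowski_in_fspace by blast
  then have "kuratowski ` X \<subseteq> Xhat"
    unfolding Xhat_def by (simp add: closure_of_subset)
  then show "x \<in> X \<Longrightarrow> kuratowski x \<in> Xhat"
    by blast
qed

lemma Xhat_subset_fspace: "Xhat \<subseteq> FS"
  unfolding Xhat_def by (metis closure_of_subset_topspace F.topspace_mtopology)

lemma closedin_Xhat: "closedin F.mtopology Xhat"
  by (simp add: Xhat_def)

lemma Xhat_approx:
  assumes "a \<in> Xhat" "e > 0"
  obtains x where "x \<in> X" "FD a (kuratowski x) < e"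
proof -
  have "\<forall>r>0. \<exists>y\<in>kuratowski ` X. y \<in> F.mball a r"
    using assms(1) unfolding Xhat_def F.metric_closure_of by blast
  then obtain x where "x \<in> X" "kuratowski x \<in> F.mball a e"
    using assms(2) by blast
  then show thesis
    using that by (simp add: F.in_mball)
qed

lemma ghost_notin_Xhat: "ghost \<notin> Xhat"
proof
  assume "ghost \<in> Xhat"
  then obtain x where "x \<in> X" "FD ghost (kuratowski x) < 1"
    by (rule Xhat_approx[where e = 1]) simp
  then show False
    using one_le_fdist_ghost[of x] by linarith
qed

lemma isometric_embedding_kuratowski_Xhat: "isometric_embedding X p Xhat pF kuratowski"
  using isometric_embedding_kuratowski kuratowski_in_Xhat
  unfolding isometric_embedding_def by blast

lemma p_cauchy_completion_ghost:
  "p_cauchy_completion X p (insert ghost Xhat) pF kuratowski"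
  unfolding p_cauchy_completion_def
proof (intro conjI)
  show "partial_metric (insert ghost Xhat) pF"
    using Xhat_subset_fspace ghost_in_fspace
    by (intro partial_metric_subset[OF F.partial_metric_weighted_pmetric]) auto
  have "closedin F.mtopology {ghost}"
    using ghost_in_fspace
    by (simp add: F.Hausdorff_space_mtopology Hausdorff_imp_t1_space closedin_t1_singleton)
  then have "closedin F.mtopology (insert ghost Xhat)"
    using closedin_Xhat by (metis closedin_Un insert_is_Un)
  then show "p_complete (insert ghost Xhat) pF"
    by (rule F.p_complete_weighted_pmetric[OF mcomplete_fspace])
  show "isometric_embedding X p (insert ghost Xhat) pF kuratowski"
    using isometric_embedding_kuratowski_Xhat unfolding isometric_embedding_def by blast
  show "p_dense (insert ghost Xhat) pF (kuratowski ` X)"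
    unfolding p_dense_def
  proof (intro conjI ballI allI impI)
    show "kuratowski ` X \<subseteq> insert ghost Xhat"
      using kuratowski_in_Xhat by blast
    fix a and e :: real assume a: "a \<in> insert ghost Xhat" and "e > 0"
    show "\<exists>b\<in>kuratowski ` X. b \<in> pball (insert ghost Xhat) pF a e"
    proof (cases "a = ghost")
      case True
      then have "kuratowski x0 \<in> pball (insert ghost Xhat) pF a e"
        using pF_ghost_base \<open>e > 0\<close> kuratowski_in_Xhat[OF base_in] by (simp add: pball_def)
      then show ?thesis
        using base_in by blast
    next
      case False
      then have "a \<in> Xhat"
        using a by simp
      then obtain x where x: "x \<in> X" "FD a (kuratowski x) < e"
        using \<open>e > 0\<close> by (rule Xhat_approx)
      have "a \<in> FS"
        using \<open>a \<in> Xhat\<close> Xhat_subset_fspace by blast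
      then have "pF a (kuratowski x) \<le> pF a a + FD a (kuratowski x)"
        using kuratowski_in_fspace[OF x(1)] by (rule F.weighted_pmetric_le)
      then have "pF a (kuratowski x) < pF a a + e"
        using x(2) by linarith
      then show ?thesis
        using x kuratowski_in_Xhat by (auto simp: pball_def)
    qed
  qed
qed

lemma no_isometric_extension_ghost:
  "\<not> (\<exists>ft. isometric_embedding (insert ghost Xhat) pF Xhat pF ft \<and>
          (\<forall>x\<in>X. ft (kuratowski x) = kuratowski x))"
proof
  assume "\<exists>ft. isometric_embedding (insert ghost Xhat) pF Xhat pF ft \<and>
          (\<forall>x\<in>X. ft (kuratowski x) = kuratowski x)"
  then obtain ft where iso: "isometric_embedding (insert ghost Xhat) pF Xhat pF ft"
    and fixes_X: "\<forall>x\<in>X. ft (kuratowski x) = kuratowski x"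
    by blast
  have "ft ghost \<in> Xhat"
    using iso unfolding isometric_embedding_def by blast
  then obtain x where x: "x \<in> X" "FD (ft ghost) (kuratowski x) < 1"
    by (rule Xhat_approx[where e = 1]) simp
  have "pmetric_dist pF (ft ghost) (ft (kuratowski x)) = pmetric_dist pF ghost (kuratowski x)"
    using iso x(1) kuratowski_in_Xhat by (intro isometric_embedding_pmetric_dist) auto
  then have "FD (ft ghost) (kuratowski x) = FD ghost (kuratowski x)"
    using fixes_X x(1) \<open>ft ghost \<in> Xhat\<close> Xhat_subset_fspace ghost_in_fspace
      kuratowski_in_fspace
    by (auto simp: F.pmetric_dist_weighted_pmetric)
  then show False
    using x(2) one_le_fdist_ghost[OF x(1)] by linarith
qed

lemma nonextendable_completion_ghost:
  "nonextendable_completion X p (insert ghost Xhat) pF kuratowski Xhat pF kuratowski"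
  unfolding nonextendable_completion_def
  using p_cauchy_completion_ghost no_isometric_extension_ghost
    isometric_embedding_kuratowski_Xhat
    partial_metric_subset[OF F.partial_metric_weighted_pmetric Xhat_subset_fspace]
    F.p_complete_weighted_pmetric[OF mcomplete_fspace closedin_Xhat]
  by blast

(* The theorem prescribes the carrier type (nat \<Rightarrow> 'a) set \<times> real.  A point of Xhat is encoded
   by the set of sequences in X whose Kuratowski images converge to it; the ghost, being no such
   limit, gets the empty set. *)

definition encode :: "('a option \<Rightarrow> real) \<Rightarrow> (nat \<Rightarrow> 'a) set \<times> real" where
  "encode a = ({s. range s \<subseteq> X \<and> limitin F.mtopology (kuratowski \<circ> s) a sequentially}, 0)"

lemma encode_ghost: "encode ghost = ({}, 0)"
proof -
  have "ghost \<in> Xhat" if "range s \<subseteq> X" "limitin F.mtopology (kuratowski \<circ> s) ghost sequentially" for s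
    using that(2) closedin_Xhat
    by (rule limitin_closedin) (use that(1) kuratowski_in_Xhat in \<open>auto intro: always_eventually\<close>)
  then show ?thesis
    using ghost_notin_Xhat by (auto simp: encode_def)
qed

lemma encode_nonempty:
  assumes "a \<in> Xhat" obtains s where "s \<in> fst (encode a)"
proof -
  obtain \<sigma> where \<sigma>: "range \<sigma> \<subseteq> kuratowski ` X" "limitin F.mtopology \<sigma> a sequentially"
    using assms unfolding Xhat_def F.closure_of_sequentially by blast
  then have "\<forall>n. \<exists>x\<in>X. \<sigma> n = kuratowski x"
    by blast
  then obtain s where "\<And>n. s n \<in> X" "\<And>n. \<sigma> n = kuratowski (s n)"
    by metis
  moreover from this have "kuratowski \<circ> s = \<sigma>"
    by auto
  ultimately have "s \<in> fst (encode a)"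
    using \<sigma>(2) by (auto simp: encode_def)
  then show thesis
    by (rule that)
qed

lemma inj_on_encode: "inj_on encode (insert ghost Xhat)"
proof (rule inj_onI)
  fix a b assume a: "a \<in> insert ghost Xhat" and b: "b \<in> insert ghost Xhat"
    and eq: "encode a = encode b"
  consider "a = ghost" "b = ghost" | "a \<in> Xhat" "b \<in> Xhat"
    | "a \<in> Xhat" "b = ghost" | "a = ghost" "b \<in> Xhat"
    using a b by blast
  then show "a = b"
  proof cases
    case 2
    then obtain s where "s \<in> fst (encode a)"
      by (metis encode_nonempty)
    then have "limitin F.mtopology (kuratowski \<circ> s) a sequentially"
      "limitin F.mtopology (kuratowski \<circ> s) b sequentially"
      using eq by (auto simp: encode_def)
    then show ?thesis
      by (rule F.limitin_metric_unique) simp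
  qed (use eq encode_ghost encode_nonempty in \<open>metis empty_iff fst_conv\<close>)+
qed

end

theorem theorem1p9:
  fixes X :: "'a set" and p :: "'a \<Rightarrow> 'a \<Rightarrow> real"
  assumes "partial_metric X p" and "X \<noteq> {}"
  shows "\<exists>(Xt :: ((nat \<Rightarrow> 'a) set \<times> real) set) pt j
            (Y :: ((nat \<Rightarrow> 'a) set \<times> real) set) q f.
           p_cauchy_completion X p Xt pt j \<and>
           partial_metric Y q \<and> p_complete Y q \<and>
           isometric_embedding X p Y q f \<and>
           \<not> (\<exists>ft. isometric_embedding Xt pt Y q ft \<and> (\<forall>x\<in>X. ft (j x) = f x))"
proof -
  obtain x0 where "x0 \<in> X"
    using assms(2) by blast
  with assms(1) interpret pointed_partial_metric X p x0
    by unfold_locales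
  have "nonextendable_completion X p
      (encode ` insert ghost Xhat) (image_pmetric (insert ghost Xhat) encode pF)
      (encode \<circ> kuratowski)
      (encode ` Xhat) (image_pmetric (insert ghost Xhat) encode pF)
      (encode \<circ> kuratowski)"
    by (rule nonextendable_completion_image[OF inj_on_encode _ nonextendable_completion_ghost]) blast
  then show ?thesis
    unfolding nonextendable_completion_def by blast
qed

end
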